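(* Let $\mathcal{S}$ be a finite skew translation generalized quadrangle of order $s$ with $s$ even, with elation group $G$ and associated $4$-gonal family $(G,\{A_i\}_{i=0}^s,\{A_i^*\}_{i=0}^s)$, and let $U_0:=\bigcap_{i=0}^s A_i^*$. Let $0\le i,j\le s$. Then: (1) if $g\in U_0$, then $|A_i^*\cap gG'|=|G'|$, and $|A_i\cap gG'|$ equals $1$ if $g\in G'$ and $0$ otherwise; (2) if $g\in U_0$, then $|A_i^*\cap g^G|=|g^G|$, and $|A_i\cap g^G|$ equals $1$ if $g=1$ and $0$ otherwise; (3) if $g\in A_j^*\setminus U_0$, then $|A_i^*\cap g^G|$ equals $|g^G|$ if $i=j$ and $0$ otherwise.
   Context: A generalized quadrangle of order $s$: each line has $s+1$ points, each point is on $s+1$ lines, and for each non-incident point-line pair $(P,\ell)$ there is a unique point on $\ell$ collinear with $P$. An elation about $P$ is an automorphism that is the identity or fixes each line through $P$ and no point not collinear with $P$; a symmetry about $P$ is an elation about $P$ fixing every point collinear with $P$. $\mathcal{S}$ is an elation generalized quadrangle with base point $P$ and elation group $G$ if $G$ consists of elations about $P$ and acts regularly on the points not collinear with $P$; it is a skew translation generalized quadrangle if $G$ contains a subgroup of $s$ symmetries about $P$. The associated $4$-gonal family: fix a point $y$ not collinear with $P$, let $M_0,\dots,M_s$ be the lines through $y$, let $z_i$ be the unique point of $M_i$ collinear with $P$, and let $A_i$, $A_i^*$ be the stabilizers in $G$ of $M_i$ and $z_i$ respectively. $g^G$ denotes the conjugacy class of $g$ and $G'$ the derived subgroup. *)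

theory Defs
  imports "HOL-Algebra.Algebra"
begin

definition collinear :: "('p \<Rightarrow> 'l \<Rightarrow> bool) \<Rightarrow> 'p \<Rightarrow> 'p \<Rightarrow> bool" where
  "collinear inc x y \<longleftrightarrow> (\<exists>l. inc x l \<and> inc y l)"

definition GQ :: "('p::finite \<Rightarrow> 'l::finite \<Rightarrow> bool) \<Rightarrow> nat \<Rightarrow> bool" where
  "GQ inc s \<longleftrightarrow>
     (\<forall>l. card {x. inc x l} = s + 1) \<and>
     (\<forall>x. card {l. inc x l} = s + 1) \<and>
     (\<forall>x y l m. x \<noteq> y \<and> inc x l \<and> inc y l \<and> inc x m \<and> inc y m \<longrightarrow> l = m) \<and>
     (\<forall>x l. \<not> inc x l \<longrightarrow> (\<exists>!y. inc y l \<and> collinear inc x y))"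

type_synonym ('p,'l) aut = "('p \<Rightarrow> 'p) \<times> ('l \<Rightarrow> 'l)"

definition automorphism :: "('p \<Rightarrow> 'l \<Rightarrow> bool) \<Rightarrow> ('p,'l) aut \<Rightarrow> bool" where
  "automorphism inc a \<longleftrightarrow> bij (fst a) \<and> bij (snd a) \<and>
     (\<forall>x l. inc x l \<longleftrightarrow> inc (fst a x) (snd a l))"

definition aut_group :: "('p,'l) aut set \<Rightarrow> ('p,'l) aut monoid" where
  "aut_group G = \<lparr>carrier = G, monoid.mult = (\<lambda>a b. (fst a \<circ> fst b, snd a \<circ> snd b)),
                   monoid.one = (id, id)\<rparr>"

definition aut_id :: "('p,'l) aut" where "aut_id = (id, id)"

definition elation :: "('p \<Rightarrow> 'l \<Rightarrow> bool) \<Rightarrow> 'p \<Rightarrow> ('p,'l) aut \<Rightarrow> bool" where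
  "elation inc P a \<longleftrightarrow> automorphism inc a \<and>
     (a = aut_id \<or>
      ((\<forall>l. inc P l \<longrightarrow> snd a l = l) \<and>
       (\<forall>x. \<not> collinear inc x P \<longrightarrow> fst a x \<noteq> x)))"

definition symmetry :: "('p \<Rightarrow> 'l \<Rightarrow> bool) \<Rightarrow> 'p \<Rightarrow> ('p,'l) aut \<Rightarrow> bool" where
  "symmetry inc P a \<longleftrightarrow> elation inc P a \<and> (\<forall>x. collinear inc x P \<longrightarrow> fst a x = x)"

definition EGQ :: "('p::finite \<Rightarrow> 'l::finite \<Rightarrow> bool) \<Rightarrow> nat \<Rightarrow> 'p \<Rightarrow> ('p,'l) aut set \<Rightarrow> bool" where
  "EGQ inc s P G \<longleftrightarrow> GQ inc s \<and> group (aut_group G) \<and>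
     (\<forall>a\<in>G. elation inc P a) \<and>
     (\<forall>x y. \<not> collinear inc x P \<and> \<not> collinear inc y P \<longrightarrow> (\<exists>!a. a \<in> G \<and> fst a x = y))"

definition STGQ :: "('p::finite \<Rightarrow> 'l::finite \<Rightarrow> bool) \<Rightarrow> nat \<Rightarrow> 'p \<Rightarrow> ('p,'l) aut set \<Rightarrow> bool" where
  "STGQ inc s P G \<longleftrightarrow> EGQ inc s P G \<and>
     (\<exists>C. subgroup C (aut_group G) \<and> card C = s \<and> (\<forall>a\<in>C. symmetry inc P a))"

text \<open>4-gonal family: for a line M through y, z(M) is the unique point on M collinear with P;
  A M is the stabilizer of M, Astar M the stabilizer of z(M).\<close>
definition zpt :: "('p \<Rightarrow> 'l \<Rightarrow> bool) \<Rightarrow> 'p \<Rightarrow> 'l \<Rightarrow> 'p" where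
  "zpt inc P M = (THE z. inc z M \<and> collinear inc z P)"

definition stabA :: "('p,'l) aut set \<Rightarrow> 'l \<Rightarrow> ('p,'l) aut set" where
  "stabA G M = {a \<in> G. snd a M = M}"

definition stabAstar :: "('p \<Rightarrow> 'l \<Rightarrow> bool) \<Rightarrow> 'p \<Rightarrow> ('p,'l) aut set \<Rightarrow> 'l \<Rightarrow> ('p,'l) aut set" where
  "stabAstar inc P G M = {a \<in> G. fst a (zpt inc P M) = zpt inc P M}"

definition conj_class :: "('a,'b) monoid_scheme \<Rightarrow> 'a \<Rightarrow> 'a set" where
  "conj_class H g = {h \<otimes>\<^bsub>H\<^esub> g \<otimes>\<^bsub>H\<^esub> inv\<^bsub>H\<^esub> h | h. h \<in> carrier H}"

end

theory Submission
  imports Defs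
begin

(*
  Let S be the group of symmetries about P in G. Counting points gives |G| = s^3,
  |A_i^*| = s^2, |A_i| = s, and A_i meets S trivially, so A_i S = A_i^* once |S| = s.
  Hence A_i^* and A_j^* meet exactly in S for i <> j, and G is the union of the A_i^*.
  Writing G = A_j^* A_i shows that every A_i^* is normal, so commutators of elements of
  different A_i^* lie in A_i^* and A_j^*, hence in S; a commutator identity extends this to
  all pairs, so G' <= S = U_0. The counts follow because S is a normal subgroup contained in
  every A_i^* and meeting every A_i trivially.
*)

abbreviation commutator :: "('a, 'b) monoid_scheme \<Rightarrow> 'a \<Rightarrow> 'a \<Rightarrow> 'a" where
  "commutator G x y \<equiv> x \<otimes>\<^bsub>G\<^esub> y \<otimes>\<^bsub>G\<^esub> inv\<^bsub>G\<^esub> x \<otimes>\<^bsub>G\<^esub> inv\<^bsub>G\<^esub> y"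

lemma card_inter_subset_singleton:
  assumes "A \<inter> B \<subseteq> {c}" and "c \<in> A"
  shows "card (A \<inter> B) = (if c \<in> B then 1 else 0)"
proof -
  have "A \<inter> B = (if c \<in> B then {c} else {})" using assms by auto
  then show ?thesis by simp
qed

context group
begin

lemma inv_mult_cancel_left: "x \<in> carrier G \<Longrightarrow> y \<in> carrier G \<Longrightarrow> inv x \<otimes> (x \<otimes> y) = y"
  by (simp add: m_assoc[symmetric])

lemma mult_inv_cancel_left: "x \<in> carrier G \<Longrightarrow> y \<in> carrier G \<Longrightarrow> x \<otimes> (inv x \<otimes> y) = y"
  by (simp add: m_assoc[symmetric])

lemma set_mult_eq_image: "H <#> K = (\<lambda>(h, k). h \<otimes> k) ` (H \<times> K)"
  unfolding set_mult_def by auto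

lemma card_set_mult_trivial_inter:
  assumes H: "subgroup H G" and K: "subgroup K G" and HK: "H \<inter> K \<subseteq> {\<one>}"
  shows "card (H <#> K) = card H * card K"
proof -
  have "inj_on (\<lambda>(h, k). h \<otimes> k) (H \<times> K)"
  proof (rule inj_onI, clarify)
    fix h k h' k' assume in_HK: "h \<in> H" "k \<in> K" "h' \<in> H" "k' \<in> K" and eq: "h \<otimes> k = h' \<otimes> k'"
    have carr: "h \<in> carrier G" "k \<in> carrier G" "h' \<in> carrier G" "k' \<in> carrier G"
      using in_HK subgroup.mem_carrier[OF H] subgroup.mem_carrier[OF K] by auto
    have "inv h' \<otimes> h = inv h' \<otimes> (h \<otimes> k) \<otimes> inv k"
      using carr by (simp add: m_assoc)
    also have "\<dots> = inv h' \<otimes> (h' \<otimes> k') \<otimes> inv k"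
      by (simp only: eq)
    also have "\<dots> = k' \<otimes> inv k"
      using carr by (simp add: inv_mult_cancel_left)
    finally have "inv h' \<otimes> h = k' \<otimes> inv k" .
    moreover have "inv h' \<otimes> h \<in> H" "k' \<otimes> inv k \<in> K"
      using in_HK H K by (simp_all add: subgroup.m_closed subgroup.m_inv_closed)
    ultimately have "inv h' \<otimes> h \<in> H \<inter> K" by simp
    then have "inv h' \<otimes> h = \<one>" using HK by auto
    then have "h = h'"
      using mult_inv_cancel_left[of h' h] carr by simp
    then show "h = h' \<and> k = k'" using eq carr by simp
  qed
  then show ?thesis
    by (simp add: set_mult_eq_image card_image card_cartesian_product)
qed

lemma commutator_in_normal_inter:
  assumes N: "N \<lhd> G" and K: "K \<lhd> G" and x: "x \<in> N" and y: "y \<in> K"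
  shows "commutator G x y \<in> N \<inter> K"
proof
  interpret N: subgroup N G using N by (rule normal_imp_subgroup)
  interpret K: subgroup K G using K by (rule normal_imp_subgroup)
  have carr: "x \<in> carrier G" "y \<in> carrier G" using x y by auto
  have "y \<otimes> inv x \<otimes> inv y \<in> N"
    using normal.inv_op_closed2[OF N carr(2)] x by simp
  then have "x \<otimes> (y \<otimes> inv x \<otimes> inv y) \<in> N" using x by simp
  then show "commutator G x y \<in> N" using carr by (simp add: m_assoc)
  have "x \<otimes> y \<otimes> inv x \<in> K"
    using normal.inv_op_closed2[OF K carr(1) y] .
  then show "commutator G x y \<in> K" using y by simp
qed

lemma commutator_eq_mult_right:
  assumes "x \<in> carrier G" "y \<in> carrier G" "z \<in> carrier G"
  shows "commutator G x y = commutator G x (y \<otimes> z) \<otimes> (y \<otimes> inv (commutator G x z) \<otimes> inv y)"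
  using assms by (simp add: m_assoc inv_mult_group inv_mult_cancel_left mult_inv_cancel_left)

lemma one_in_l_coset_iff:
  assumes H: "subgroup H G" and g: "g \<in> carrier G"
  shows "\<one> \<in> g <# H \<longleftrightarrow> g \<in> H"
proof
  assume "\<one> \<in> g <# H"
  then have "inv g \<otimes> \<one> \<in> H" by (rule subgroup.lcos_module_imp[OF H is_group g])
  then have "inv g \<in> H" using g by simp
  then show "g \<in> H" using subgroup.m_inv_closed[OF H \<open>inv g \<in> H\<close>] g by simp
next
  assume "g \<in> H"
  then have "inv g \<otimes> \<one> \<in> H" using subgroup.m_inv_closed[OF H] g by simp
  then show "\<one> \<in> g <# H" using subgroup.lcos_module_rev[OF H is_group g] by simp
qed

lemma card_l_coset:
  assumes "finite (carrier G)" and "H \<subseteq> carrier G" and "g \<in> carrier G"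
  shows "card (g <# H) = card H"
proof -
  have "g <# H \<in> lcosets H" using assms(3) unfolding LCOSETS_def by blast
  then show ?thesis using l_card_cosets_equal assms(1,2) by simp
qed

lemma one_in_conj_class_iff:
  assumes "g \<in> carrier G"
  shows "\<one> \<in> conj_class G g \<longleftrightarrow> g = \<one>"
proof
  assume "\<one> \<in> conj_class G g"
  then obtain h where h: "h \<in> carrier G" "\<one> = h \<otimes> g \<otimes> inv h" unfolding conj_class_def by blast
  have "g = inv h \<otimes> (h \<otimes> g \<otimes> inv h) \<otimes> h"
    using assms h(1) by (simp add: m_assoc inv_mult_cancel_left)
  also have "\<dots> = \<one>"
    using h(1) by (simp only: h(2)[symmetric]) simp
  finally show "g = \<one>" .
next
  assume "g = \<one>"
  then show "\<one> \<in> conj_class G g"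
    unfolding conj_class_def by (intro CollectI exI[of _ \<one>]) simp
qed

lemma conj_class_subset_normal:
  assumes "N \<lhd> G" and "g \<in> N"
  shows "conj_class G g \<subseteq> N"
proof
  fix x assume "x \<in> conj_class G g"
  then obtain h where "h \<in> carrier G" "x = h \<otimes> g \<otimes> inv h" unfolding conj_class_def by blast
  then show "x \<in> N" using normal.inv_op_closed2[OF assms(1) _ assms(2)] by simp
qed

lemma conj_class_disjoint_normal:
  assumes N: "N \<lhd> G" and g: "g \<in> carrier G" "g \<notin> N"
  shows "conj_class G g \<inter> N = {}"
proof (rule equals0I)
  fix x assume "x \<in> conj_class G g \<inter> N"
  then obtain h where h: "h \<in> carrier G" "h \<otimes> g \<otimes> inv h \<in> N"
    unfolding conj_class_def by blast
  have "inv h \<otimes> (h \<otimes> g \<otimes> inv h) \<otimes> h \<in> N"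
    by (rule normal.inv_op_closed1[OF N h])
  then show False using h(1) g by (simp add: m_assoc inv_mult_cancel_left)
qed

end

locale gq =
  fixes inc :: "'p::finite \<Rightarrow> 'l::finite \<Rightarrow> bool" and s :: nat
  assumes GQ: "GQ inc s" and order_pos: "0 < s"
begin

lemma card_points_on: "card {x. inc x l} = s + 1"
  using GQ unfolding GQ_def by blast

lemma card_lines_through: "card {l. inc x l} = s + 1"
  using GQ unfolding GQ_def by blast

lemma line_unique: "x \<noteq> y \<Longrightarrow> inc x l \<Longrightarrow> inc y l \<Longrightarrow> inc x m \<Longrightarrow> inc y m \<Longrightarrow> l = m"
  using GQ unfolding GQ_def by blast

lemma ex1_collinear_on: "\<not> inc x l \<Longrightarrow> \<exists>!y. inc y l \<and> collinear inc x y"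
  using GQ unfolding GQ_def by blast

lemma collinear_on_unique:
  "\<not> inc x l \<Longrightarrow> inc a l \<Longrightarrow> collinear inc x a \<Longrightarrow> inc b l \<Longrightarrow> collinear inc x b \<Longrightarrow> a = b"
  using ex1_collinear_on[of x l] by blast

lemma collinear_commute: "collinear inc x y \<longleftrightarrow> collinear inc y x"
  unfolding collinear_def by blast

lemma on_line_if_collinear:
  "inc x l \<Longrightarrow> inc y l \<Longrightarrow> x \<noteq> y \<Longrightarrow> collinear inc z x \<Longrightarrow> collinear inc z y \<Longrightarrow> inc z l"
  using collinear_on_unique[of z l x y] by blast

lemma card_other_points_on: "inc x l \<Longrightarrow> card {v. inc v l \<and> v \<noteq> x} = s"
  using card_points_on[of l] card_Diff_singleton[of x "{v. inc v l}"]
  by (simp add: set_diff_eq)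

lemma card_other_lines_through: "inc x l \<Longrightarrow> card {m. inc x m \<and> m \<noteq> l} = s"
  using card_lines_through[of x] card_Diff_singleton[of l "{m. inc x m}"]
  by (simp add: set_diff_eq)

lemma ex_other_point_on: "\<exists>w. inc w l \<and> w \<noteq> x"
proof -
  have "s \<le> card ({v. inc v l} - {x})"
    using card_points_on[of l] by (simp add: card_Diff_singleton_if)
  then have "{v. inc v l} - {x} \<noteq> {}" using order_pos by (intro notI) simp
  then show ?thesis by blast
qed

lemma ex_other_line_through: "\<exists>m. inc x m \<and> m \<noteq> l"
proof -
  have "s \<le> card ({m. inc x m} - {l})"
    using card_lines_through[of x] by (simp add: card_Diff_singleton_if)
  then have "{m. inc x m} - {l} \<noteq> {}" using order_pos by (intro notI) simp
  then show ?thesis by blast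
qed

lemma ex_line_through: "\<exists>l. inc x l"
  using ex_other_line_through by blast

lemma card_collinear_off_line:
  assumes "inc w L"
  shows "card {v. collinear inc v w \<and> \<not> inc v L} = s ^ 2"
proof -
  let ?M = "{m. inc w m \<and> m \<noteq> L}"
  have eq: "{v. collinear inc v w \<and> \<not> inc v L} = (\<Union>m\<in>?M. {v. inc v m \<and> v \<noteq> w})"
    using assms line_unique unfolding collinear_def by blast
  have "card (\<Union>m\<in>?M. {v. inc v m \<and> v \<noteq> w}) = (\<Sum>m\<in>?M. card {v. inc v m \<and> v \<noteq> w})"
    by (rule card_UN_disjoint) (use line_unique in auto)
  also have "\<dots> = s * s"
    using card_other_points_on card_other_lines_through[OF assms] by simp
  finally show ?thesis by (simp add: eq power2_eq_square)
qed

lemma card_not_collinear: "card {x. \<not> collinear inc x P} = s ^ 3"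
proof -
  obtain L where L: "inc P L" using ex_line_through by blast
  let ?W = "{w. inc w L \<and> w \<noteq> P}"
  let ?Q = "\<lambda>w. {v. collinear inc v w \<and> \<not> inc v L}"
  have eq: "{x. \<not> collinear inc x P} = (\<Union>w\<in>?W. ?Q w)"
  proof (intro Set.set_eqI iffI)
    fix u assume u: "u \<in> {x. \<not> collinear inc x P}"
    then have u_off: "\<not> inc u L" using L unfolding collinear_def by blast
    then obtain w where "inc w L" "collinear inc u w" using ex1_collinear_on by blast
    then show "u \<in> (\<Union>w\<in>?W. ?Q w)" using u u_off by auto
  next
    fix u assume "u \<in> (\<Union>w\<in>?W. ?Q w)"
    then show "u \<in> {x. \<not> collinear inc x P}"
      using L on_line_if_collinear[of P L] by blast
  qed
  have "card (\<Union>w\<in>?W. ?Q w) = (\<Sum>w\<in>?W. card (?Q w))"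
    by (rule card_UN_disjoint) (use collinear_on_unique in auto)
  also have "\<dots> = s * s ^ 2"
    using card_collinear_off_line card_other_points_on[OF L] by simp
  finally show ?thesis by (simp add: eq power3_eq_cube power2_eq_square)
qed

end

lemma carrier_aut_group [simp]: "carrier (aut_group G) = G"
  by (simp add: aut_group_def)

lemma fst_mult_aut_group [simp]: "fst (a \<otimes>\<^bsub>aut_group G\<^esub> b) = fst a \<circ> fst b"
  by (simp add: aut_group_def)

lemma snd_mult_aut_group [simp]: "snd (a \<otimes>\<^bsub>aut_group G\<^esub> b) = snd a \<circ> snd b"
  by (simp add: aut_group_def)

lemma one_aut_group: "\<one>\<^bsub>aut_group G\<^esub> = (id, id)"
  by (simp add: aut_group_def)

locale elation_gq = gq inc s for inc :: "'p::finite \<Rightarrow> 'l::finite \<Rightarrow> bool" and s +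
  fixes P :: 'p and G :: "('p, 'l) aut set" and y :: 'p
  assumes group_aut_group: "group (aut_group G)"
    and elations: "\<forall>a\<in>G. elation inc P a"
    and regular: "\<forall>x x'. \<not> collinear inc x P \<and> \<not> collinear inc x' P \<longrightarrow> (\<exists>!a. a \<in> G \<and> fst a x = x')"
    and y_not_collinear: "\<not> collinear inc y P"

sublocale elation_gq \<subseteq> aut: group "aut_group G"
  by (rule group_aut_group)

context elation_gq
begin

abbreviation \<Gamma> where "\<Gamma> \<equiv> aut_group G"

lemma G_closed [simp]:
  "\<one>\<^bsub>\<Gamma>\<^esub> \<in> G" "a \<in> G \<Longrightarrow> b \<in> G \<Longrightarrow> a \<otimes>\<^bsub>\<Gamma>\<^esub> b \<in> G" "a \<in> G \<Longrightarrow> inv\<^bsub>\<Gamma>\<^esub> a \<in> G"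
  using aut.one_closed aut.m_closed aut.inv_closed by simp_all

lemma fst_inv_cancel:
  assumes "a \<in> G"
  shows "fst a (fst (inv\<^bsub>\<Gamma>\<^esub> a) x) = x" and "fst (inv\<^bsub>\<Gamma>\<^esub> a) (fst a x) = x"
proof -
  have "a \<otimes>\<^bsub>\<Gamma>\<^esub> inv\<^bsub>\<Gamma>\<^esub> a = (id, id)" "inv\<^bsub>\<Gamma>\<^esub> a \<otimes>\<^bsub>\<Gamma>\<^esub> a = (id, id)"
    using assms by (simp_all add: one_aut_group)
  then show "fst a (fst (inv\<^bsub>\<Gamma>\<^esub> a) x) = x" and "fst (inv\<^bsub>\<Gamma>\<^esub> a) (fst a x) = x"
    by (metis comp_apply fst_conv fst_mult_aut_group id_apply)+
qed

lemma snd_inv_cancel: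
  assumes "a \<in> G"
  shows "snd (inv\<^bsub>\<Gamma>\<^esub> a) (snd a l) = l"
proof -
  have "inv\<^bsub>\<Gamma>\<^esub> a \<otimes>\<^bsub>\<Gamma>\<^esub> a = (id, id)"
    using assms by (simp add: one_aut_group)
  then show ?thesis
    by (metis comp_apply snd_conv snd_mult_aut_group id_apply)
qed

lemma inc_image_iff: "a \<in> G \<Longrightarrow> inc (fst a x) (snd a l) \<longleftrightarrow> inc x l"
  using elations unfolding elation_def automorphism_def by blast

lemma fixes_lines_through_P: "a \<in> G \<Longrightarrow> inc P l \<Longrightarrow> snd a l = l"
  using elations unfolding elation_def aut_id_def by auto

lemma fixes_P: assumes a: "a \<in> G" shows "fst a P = P"
proof -
  obtain l where l: "inc P l" using ex_line_through by blast
  obtain m where m: "inc P m" "m \<noteq> l" using ex_other_line_through by blast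
  have "inc (fst a P) l" "inc (fst a P) m"
    using inc_image_iff[OF a] fixes_lines_through_P[OF a] l m by metis+
  then show ?thesis using line_unique l m by blast
qed

lemma collinear_image_iff:
  assumes a: "a \<in> G"
  shows "collinear inc (fst a x) (fst a x') \<longleftrightarrow> collinear inc x x'"
proof
  assume "collinear inc (fst a x) (fst a x')"
  then obtain m where m: "inc (fst a x) m" "inc (fst a x') m" unfolding collinear_def by blast
  have "bij (snd a)" using a elations unfolding elation_def automorphism_def by blast
  then obtain l where "m = snd a l" by (metis bij_pointE)
  then show "collinear inc x x'" using m inc_image_iff[OF a] unfolding collinear_def by blast
next
  assume "collinear inc x x'"
  then show "collinear inc (fst a x) (fst a x')"
    using inc_image_iff[OF a] unfolding collinear_def by blast
qed

lemma collinear_P_image_iff: "a \<in> G \<Longrightarrow> collinear inc (fst a x) P \<longleftrightarrow> collinear inc x P"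
  using collinear_image_iff[of a x P] fixes_P[of a] by simp

lemma regular_unique:
  assumes "a \<in> G" "b \<in> G" "\<not> collinear inc x P" "fst a x = fst b x"
  shows "a = b"
  using assms regular collinear_P_image_iff[OF assms(1), of x] by metis

lemma regular_exists:
  assumes "\<not> collinear inc x P" "\<not> collinear inc x' P"
  shows "\<exists>a\<in>G. fst a x = x'"
  using assms regular by blast

lemma eq_one_if_fixes:
  "a \<in> G \<Longrightarrow> \<not> collinear inc x P \<Longrightarrow> fst a x = x \<Longrightarrow> a = \<one>\<^bsub>\<Gamma>\<^esub>"
  using regular_unique[of a "\<one>\<^bsub>\<Gamma>\<^esub>" x] G_closed(1) by (simp add: one_aut_group)

lemma card_G: "card G = s ^ 3"
proof -
  have "bij_betw (\<lambda>a. fst a y) G {x. \<not> collinear inc x P}"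
  proof (rule bij_betwI')
    show "\<And>a b. a \<in> G \<Longrightarrow> b \<in> G \<Longrightarrow> fst a y = fst b y \<longleftrightarrow> a = b"
      using regular_unique y_not_collinear by blast
    show "\<And>a. a \<in> G \<Longrightarrow> fst a y \<in> {x. \<not> collinear inc x P}"
      using collinear_P_image_iff y_not_collinear by simp
    show "\<And>x. x \<in> {x. \<not> collinear inc x P} \<Longrightarrow> \<exists>a\<in>G. x = fst a y"
      using regular_exists y_not_collinear by force
  qed
  then show ?thesis using card_not_collinear bij_betw_same_card by metis
qed

abbreviation z where "z M \<equiv> zpt inc P M"
abbreviation A where "A M \<equiv> stabA G M"
abbreviation Astar where "Astar M \<equiv> stabAstar inc P G M"

lemma ex1_collinear_P_on:
  assumes "inc y M"
  shows "\<exists>!v. inc v M \<and> collinear inc v P"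
proof -
  have "\<not> inc P M" using assms y_not_collinear unfolding collinear_def by blast
  then show ?thesis using ex1_collinear_on[of P M] collinear_commute by simp
qed

lemma
  assumes "inc y M"
  shows zpt_on: "inc (z M) M" and zpt_collinear_P: "collinear inc (z M) P"
  using theI'[OF ex1_collinear_P_on[OF assms]] unfolding zpt_def by blast+

lemma zpt_unique: "inc y M \<Longrightarrow> inc v M \<Longrightarrow> collinear inc v P \<Longrightarrow> v = z M"
  using zpt_on zpt_collinear_P ex1_collinear_P_on by blast

lemma collinear_y_zpt: "inc y M \<Longrightarrow> collinear inc y (z M)"
  using zpt_on unfolding collinear_def by blast

lemma fixes_zpt_if_collinear:
  assumes M: "inc y M" and a: "a \<in> G" and col: "collinear inc (fst a y) (z M)"
  shows "fst a (z M) = z M"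
proof -
  obtain L where L: "inc (z M) L" "inc P L"
    using zpt_collinear_P[OF M] unfolding collinear_def by blast
  have "\<not> collinear inc (fst a y) P"
    using collinear_P_image_iff[OF a] y_not_collinear by blast
  then have off: "\<not> inc (fst a y) L" using L(2) unfolding collinear_def by blast
  have "inc (fst a (z M)) L"
    using inc_image_iff[OF a, of "z M" L] fixes_lines_through_P[OF a L(2)] L(1) by simp
  moreover have "collinear inc (fst a y) (fst a (z M))"
    using collinear_image_iff[OF a] collinear_y_zpt[OF M] by blast
  ultimately show ?thesis using collinear_on_unique[OF off] L(1) col by blast
qed

lemma stabilizer_point_subgroup: "subgroup {a \<in> G. fst a v = v} \<Gamma>"
proof (rule aut.subgroupI)
  have "(id, id) \<in> {a \<in> G. fst a v = v}" using G_closed(1) by (simp add: one_aut_group)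
  then show "{a \<in> G. fst a v = v} \<noteq> {}" by blast
  fix a b assume a: "a \<in> {a \<in> G. fst a v = v}" and b: "b \<in> {a \<in> G. fst a v = v}"
  then show "inv\<^bsub>\<Gamma>\<^esub> a \<in> {a \<in> G. fst a v = v}"
    using fst_inv_cancel(2)[of a v] by auto
  show "a \<otimes>\<^bsub>\<Gamma>\<^esub> b \<in> {a \<in> G. fst a v = v}"
    using a b by auto
qed auto

lemma stabilizer_line_subgroup: "subgroup {a \<in> G. snd a M = M} \<Gamma>"
proof (rule aut.subgroupI)
  have "(id, id) \<in> {a \<in> G. snd a M = M}" using G_closed(1) by (simp add: one_aut_group)
  then show "{a \<in> G. snd a M = M} \<noteq> {}" by blast
  fix a b assume a: "a \<in> {a \<in> G. snd a M = M}" and b: "b \<in> {a \<in> G. snd a M = M}"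
  then show "inv\<^bsub>\<Gamma>\<^esub> a \<in> {a \<in> G. snd a M = M}"
    using snd_inv_cancel[of a M] by auto
  show "a \<otimes>\<^bsub>\<Gamma>\<^esub> b \<in> {a \<in> G. snd a M = M}"
    using a b by auto
qed auto

lemma Astar_subgroup: "subgroup (Astar M) \<Gamma>"
  unfolding stabAstar_def by (rule stabilizer_point_subgroup)

lemma A_subgroup: "subgroup (A M) \<Gamma>"
  unfolding stabA_def by (rule stabilizer_line_subgroup)

lemma card_Astar:
  assumes M: "inc y M"
  shows "card (Astar M) = s ^ 2"
proof -
  obtain L where L: "inc (z M) L" "inc P L"
    using zpt_collinear_P[OF M] unfolding collinear_def by blast
  have "bij_betw (\<lambda>a. fst a y) (Astar M) {v. collinear inc v (z M) \<and> \<not> inc v L}"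
  proof (rule bij_betwI')
    show "\<And>a b. a \<in> Astar M \<Longrightarrow> b \<in> Astar M \<Longrightarrow> fst a y = fst b y \<longleftrightarrow> a = b"
      using regular_unique y_not_collinear unfolding stabAstar_def by blast
  next
    fix a assume "a \<in> Astar M"
    then have a: "a \<in> G" "fst a (z M) = z M" unfolding stabAstar_def by auto
    have "\<not> collinear inc (fst a y) P"
      using collinear_P_image_iff[OF a(1)] y_not_collinear by blast
    then have "\<not> inc (fst a y) L" using L(2) unfolding collinear_def by blast
    moreover have "collinear inc (fst a y) (z M)"
      using collinear_image_iff[OF a(1), of y "z M"] collinear_y_zpt[OF M] a(2) by simp
    ultimately show "fst a y \<in> {v. collinear inc v (z M) \<and> \<not> inc v L}" by simp
  next
    fix v assume v: "v \<in> {v. collinear inc v (z M) \<and> \<not> inc v L}"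
    have "z M \<noteq> P" using zpt_on[OF M] M y_not_collinear unfolding collinear_def by auto
    then have "\<not> collinear inc v P"
      using v L on_line_if_collinear[of P L "z M" v] by auto
    then obtain a where a: "a \<in> G" "fst a y = v"
      using regular_exists y_not_collinear by blast
    then have "a \<in> Astar M"
      using fixes_zpt_if_collinear[OF M a(1)] v unfolding stabAstar_def by simp
    then show "\<exists>a\<in>Astar M. v = fst a y" using a(2) by blast
  qed
  then show ?thesis using card_collinear_off_line[OF L(1)] by (simp add: bij_betw_same_card)
qed

lemma card_A:
  assumes M: "inc y M"
  shows "card (A M) = s"
proof -
  have "bij_betw (\<lambda>a. fst a y) (A M) {v. inc v M \<and> v \<noteq> z M}"
  proof (rule bij_betwI')
    show "\<And>a b. a \<in> A M \<Longrightarrow> b \<in> A M \<Longrightarrow> fst a y = fst b y \<longleftrightarrow> a = b"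
      using regular_unique y_not_collinear unfolding stabA_def by blast
  next
    fix a assume "a \<in> A M"
    then have a: "a \<in> G" "snd a M = M" unfolding stabA_def by auto
    have "inc (fst a y) M" using inc_image_iff[OF a(1), of y M] a(2) M by simp
    moreover have "\<not> collinear inc (fst a y) P"
      using collinear_P_image_iff[OF a(1)] y_not_collinear by blast
    ultimately show "fst a y \<in> {v. inc v M \<and> v \<noteq> z M}"
      using zpt_collinear_P[OF M] by auto
  next
    fix v assume v: "v \<in> {v. inc v M \<and> v \<noteq> z M}"
    then have "\<not> collinear inc v P" using zpt_unique[OF M] by blast
    then obtain a where a: "a \<in> G" "fst a y = v"
      using regular_exists y_not_collinear by blast
    have "collinear inc v (z M)" using v zpt_on[OF M] unfolding collinear_def by blast
    then have "fst a (z M) = z M" using fixes_zpt_if_collinear[OF M a(1)] a(2) by blast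
    then have "inc v (snd a M)" "inc (z M) (snd a M)"
      using inc_image_iff[OF a(1), of y M] inc_image_iff[OF a(1), of "z M" M] a(2) M zpt_on[OF M]
      by simp_all
    then have "snd a M = M" using line_unique v zpt_on[OF M] by blast
    then show "\<exists>a\<in>A M. v = fst a y" using a unfolding stabA_def by blast
  qed
  then show ?thesis
    using card_other_points_on[OF zpt_on[OF M]] by (simp add: bij_betw_same_card)
qed

lemma A_subset_Astar:
  assumes M: "inc y M"
  shows "A M \<subseteq> Astar M"
proof
  fix a assume "a \<in> A M"
  then have a: "a \<in> G" "snd a M = M" unfolding stabA_def by auto
  have "inc (fst a (z M)) M" using inc_image_iff[OF a(1), of "z M" M] a(2) zpt_on[OF M] by simp
  moreover have "collinear inc (fst a (z M)) P"
    using collinear_P_image_iff[OF a(1)] zpt_collinear_P[OF M] by blast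
  ultimately have "fst a (z M) = z M" by (rule zpt_unique[OF M])
  then show "a \<in> Astar M" using a(1) unfolding stabAstar_def by simp
qed

lemma A_inter_Astar_other:
  assumes M: "inc y M" and M': "inc y M'" and "M \<noteq> M'"
  shows "A M \<inter> Astar M' \<subseteq> {\<one>\<^bsub>\<Gamma>\<^esub>}"
proof
  fix a assume "a \<in> A M \<inter> Astar M'"
  then have a: "a \<in> G" "snd a M = M" "fst a (z M') = z M'"
    unfolding stabA_def stabAstar_def by auto
  have "z M' \<noteq> y" using zpt_collinear_P[OF M'] y_not_collinear by auto
  then have off: "\<not> inc (z M') M"
    using line_unique[of "z M'" y M M'] M M' zpt_on[OF M'] \<open>M \<noteq> M'\<close> by blast
  have "inc (fst a y) M" using inc_image_iff[OF a(1), of y M] a(2) M by simp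
  moreover have "collinear inc (fst a y) (z M')"
    using collinear_image_iff[OF a(1), of y "z M'"] a(3) collinear_y_zpt[OF M'] by simp
  ultimately have "fst a y = y"
    using collinear_on_unique[OF off] M collinear_y_zpt[OF M'] collinear_commute by blast
  then show "a \<in> {\<one>\<^bsub>\<Gamma>\<^esub>}" using eq_one_if_fixes a(1) y_not_collinear by blast
qed

definition Sym where "Sym = {a \<in> G. \<forall>x. collinear inc x P \<longrightarrow> fst a x = x}"

lemma Sym_subgroup: "subgroup Sym \<Gamma>"
proof (rule aut.subgroupI)
  have "(id, id) \<in> Sym" using G_closed(1) unfolding Sym_def by (simp add: one_aut_group)
  then show "Sym \<noteq> {}" by blast
  fix a b assume a: "a \<in> Sym" and b: "b \<in> Sym"
  then have "fst (inv\<^bsub>\<Gamma>\<^esub> a) x = x" if "collinear inc x P" for x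
    using that fst_inv_cancel(2)[of a x] unfolding Sym_def by force
  then show "inv\<^bsub>\<Gamma>\<^esub> a \<in> Sym" using a unfolding Sym_def by auto
  show "a \<otimes>\<^bsub>\<Gamma>\<^esub> b \<in> Sym"
    using a b unfolding Sym_def by auto
qed (auto simp: Sym_def)

lemma Sym_normal: "Sym \<lhd> \<Gamma>"
proof (rule aut.normal_invI[OF Sym_subgroup])
  fix h g assume h: "h \<in> carrier \<Gamma>" and g: "g \<in> Sym"
  have "fst (h \<otimes>\<^bsub>\<Gamma>\<^esub> g \<otimes>\<^bsub>\<Gamma>\<^esub> inv\<^bsub>\<Gamma>\<^esub> h) x = x" if "collinear inc x P" for x
  proof -
    have "collinear inc (fst (inv\<^bsub>\<Gamma>\<^esub> h) x) P"
      using collinear_P_image_iff[of "inv\<^bsub>\<Gamma>\<^esub> h" x] h that by simp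
    then have "fst g (fst (inv\<^bsub>\<Gamma>\<^esub> h) x) = fst (inv\<^bsub>\<Gamma>\<^esub> h) x" using g unfolding Sym_def by blast
    then show ?thesis using fst_inv_cancel(1)[of h x] h by simp
  qed
  moreover have "h \<otimes>\<^bsub>\<Gamma>\<^esub> g \<otimes>\<^bsub>\<Gamma>\<^esub> inv\<^bsub>\<Gamma>\<^esub> h \<in> G"
    using h g unfolding Sym_def by simp
  ultimately show "h \<otimes>\<^bsub>\<Gamma>\<^esub> g \<otimes>\<^bsub>\<Gamma>\<^esub> inv\<^bsub>\<Gamma>\<^esub> h \<in> Sym" unfolding Sym_def by blast
qed

lemma Sym_subset_Astar: "inc y M \<Longrightarrow> Sym \<subseteq> Astar M"
  using zpt_collinear_P unfolding Sym_def stabAstar_def by blast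

lemma A_inter_Sym:
  assumes M: "inc y M"
  shows "A M \<inter> Sym \<subseteq> {\<one>\<^bsub>\<Gamma>\<^esub>}"
proof
  fix a assume "a \<in> A M \<inter> Sym"
  then have a: "a \<in> G" "snd a M = M" and fix_collinear: "\<And>x. collinear inc x P \<Longrightarrow> fst a x = x"
    unfolding stabA_def Sym_def by auto
  \<comment> \<open>a fixes a point w collinear with P but not with z M, hence the projection of w onto M\<close>
  obtain L where L: "inc (z M) L" "inc P L"
    using zpt_collinear_P[OF M] unfolding collinear_def by blast
  obtain L' where L': "inc P L'" "L' \<noteq> L" using ex_other_line_through by blast
  obtain w where w: "inc w L'" "w \<noteq> P" using ex_other_point_on by blast
  have w_P: "collinear inc w P" using w L' unfolding collinear_def by blast
  have "z M \<noteq> P" using zpt_on[OF M] M y_not_collinear unfolding collinear_def by auto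
  then have "\<not> collinear inc w (z M)"
    using on_line_if_collinear[OF L(2) L(1) _ w_P] line_unique[OF w(2) _ L(2) w(1) L'(1)] L'(2)
    by auto
  then have w_off: "\<not> inc w M" using zpt_on[OF M] unfolding collinear_def by blast
  then obtain u where u: "inc u M" "collinear inc w u" using ex1_collinear_on by blast
  then have "u \<noteq> z M" using \<open>\<not> collinear inc w (z M)\<close> by blast
  then have u_off: "\<not> collinear inc u P" using zpt_unique[OF M u(1)] by blast
  have "inc (fst a u) M" using inc_image_iff[OF a(1), of u M] a(2) u(1) by simp
  moreover have "collinear inc w (fst a u)"
    using collinear_image_iff[OF a(1), of w u] fix_collinear[OF w_P] u(2) by simp
  ultimately have "fst a u = u" using collinear_on_unique[OF w_off] u by blast
  then show "a \<in> {\<one>\<^bsub>\<Gamma>\<^esub>}" using eq_one_if_fixes[OF a(1) u_off] by blast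
qed

lemma A_Sym_subset_Astar:
  assumes M: "inc y M"
  shows "A M <#>\<^bsub>\<Gamma>\<^esub> Sym \<subseteq> Astar M"
proof -
  have "A M <#>\<^bsub>\<Gamma>\<^esub> Sym \<subseteq> Astar M <#>\<^bsub>\<Gamma>\<^esub> Astar M"
    by (rule mono_set_mult[OF A_subset_Astar[OF M] Sym_subset_Astar[OF M]])
  then show ?thesis using aut.subgroup_mult_id[OF Astar_subgroup] by simp
qed

lemma card_A_Sym: "inc y M \<Longrightarrow> card (A M <#>\<^bsub>\<Gamma>\<^esub> Sym) = s * card Sym"
  using aut.card_set_mult_trivial_inter[OF A_subgroup Sym_subgroup A_inter_Sym] card_A by simp

lemma card_Sym_le: "card Sym \<le> s"
proof -
  obtain M where M: "inc y M" using ex_line_through by blast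
  have "s * card Sym \<le> s * s"
    using card_mono[OF _ A_Sym_subset_Astar[OF M]] card_A_Sym[OF M] card_Astar[OF M]
    by (simp add: power2_eq_square)
  then show ?thesis using order_pos by simp
qed

end

locale skew_translation_gq = elation_gq +
  assumes symmetry_subgroup:
    "\<exists>C. subgroup C (aut_group G) \<and> card C = s \<and> (\<forall>a\<in>C. symmetry inc P a)"
begin

lemma card_Sym: "card Sym = s"
proof -
  obtain C where C: "subgroup C \<Gamma>" "card C = s" "\<forall>a\<in>C. symmetry inc P a"
    using symmetry_subgroup by blast
  have "C \<subseteq> Sym"
    using C(3) subgroup.mem_carrier[OF C(1)] collinear_commute
    unfolding Sym_def symmetry_def by auto
  then have "s \<le> card Sym" using card_mono[of Sym C] C(2) by simp
  then show ?thesis using card_Sym_le by simp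
qed

lemma Astar_eq_A_Sym:
  assumes M: "inc y M"
  shows "Astar M = A M <#>\<^bsub>\<Gamma>\<^esub> Sym"
proof -
  have "card (A M <#>\<^bsub>\<Gamma>\<^esub> Sym) = card (Astar M)"
    using card_A_Sym[OF M] card_Astar[OF M] card_Sym by (simp add: power2_eq_square)
  then show ?thesis using A_Sym_subset_Astar[OF M] by (intro card_subset_eq[symmetric]) simp_all
qed

lemma Astar_inter_Astar:
  assumes M: "inc y M" and M': "inc y M'" and "M \<noteq> M'"
  shows "Astar M \<inter> Astar M' = Sym"
proof
  show "Sym \<subseteq> Astar M \<inter> Astar M'" using Sym_subset_Astar M M' by blast
  show "Astar M \<inter> Astar M' \<subseteq> Sym"
  proof
    fix x assume x: "x \<in> Astar M \<inter> Astar M'"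
    then obtain a b where ab: "a \<in> A M" "b \<in> Sym" "x = a \<otimes>\<^bsub>\<Gamma>\<^esub> b"
      using Astar_eq_A_Sym[OF M] unfolding set_mult_def by blast
    have G: "a \<in> G" "b \<in> G" using ab(1,2) unfolding stabA_def Sym_def by auto
    have "a = x \<otimes>\<^bsub>\<Gamma>\<^esub> inv\<^bsub>\<Gamma>\<^esub> b" using ab(3) G by (simp add: aut.m_assoc)
    moreover have "inv\<^bsub>\<Gamma>\<^esub> b \<in> Astar M'"
      using Sym_subset_Astar[OF M'] ab(2) subgroup.m_inv_closed[OF Astar_subgroup] by blast
    ultimately have "a \<in> Astar M'" using x subgroup.m_closed[OF Astar_subgroup] by simp
    then have "a = \<one>\<^bsub>\<Gamma>\<^esub>" using A_inter_Astar_other[OF M M' \<open>M \<noteq> M'\<close>] ab(1) by blast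
    then show "x \<in> Sym" using ab G by simp
  qed
qed

lemma G_eq_Union_Astar: "G = (\<Union>M\<in>{M. inc y M}. Astar M)"
proof -
  let ?Y = "{M. inc y M}"
  obtain M0 where M0: "inc y M0" using ex_line_through by blast
  have split: "(\<Union>M\<in>?Y. Astar M) = Sym \<union> (\<Union>M\<in>?Y. Astar M - Sym)"
    using Sym_subset_Astar[OF M0] M0 by blast
  have disjoint: "(Astar M - Sym) \<inter> (Astar M' - Sym) = {}" if "M \<in> ?Y" "M' \<in> ?Y" "M \<noteq> M'" for M M'
    using Astar_inter_Astar[of M M'] that by blast
  have "card (\<Union>M\<in>?Y. Astar M) = card Sym + card (\<Union>M\<in>?Y. Astar M - Sym)"
    unfolding split by (rule card_Un_disjoint) auto
  also have "card (\<Union>M\<in>?Y. Astar M - Sym) = (\<Sum>M\<in>?Y. card (Astar M - Sym))"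
    by (rule card_UN_disjoint) (use disjoint in simp_all)
  also have "\<dots> = (\<Sum>M\<in>?Y. s ^ 2 - s)"
    using card_Diff_subset[OF _ Sym_subset_Astar] card_Astar card_Sym by simp
  also have "card Sym + \<dots> = s + (s + 1) * (s ^ 2 - s)"
    using card_Sym card_lines_through[of y] by simp
  also have "\<dots> = s ^ 3"
    using order_pos by (simp add: power2_eq_square power3_eq_cube algebra_simps)
  finally have "card (\<Union>M\<in>?Y. Astar M) = card G" using card_G by simp
  moreover have "(\<Union>M\<in>?Y. Astar M) \<subseteq> G" unfolding stabAstar_def by blast
  ultimately show ?thesis by (intro card_subset_eq[symmetric]) simp_all
qed

lemma Astar_A_eq_G:
  assumes M: "inc y M" and M': "inc y M'" and "M \<noteq> M'"
  shows "Astar M' <#>\<^bsub>\<Gamma>\<^esub> A M = G"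
proof -
  have "Astar M' \<inter> A M \<subseteq> {\<one>\<^bsub>\<Gamma>\<^esub>}"
    using A_inter_Astar_other[OF assms] by blast
  then have "card (Astar M' <#>\<^bsub>\<Gamma>\<^esub> A M) = card G"
    using aut.card_set_mult_trivial_inter[OF Astar_subgroup A_subgroup]
      card_A[OF M] card_Astar[OF M'] card_G by (simp add: power2_eq_square power3_eq_cube)
  moreover have "Astar M' <#>\<^bsub>\<Gamma>\<^esub> A M \<subseteq> G"
    unfolding set_mult_def stabA_def stabAstar_def by auto
  ultimately show ?thesis by (intro card_subset_eq) simp_all
qed

lemma Astar_normal:
  assumes M: "inc y M"
  shows "Astar M \<lhd> \<Gamma>"
proof (rule aut.normal_invI[OF Astar_subgroup])
  fix x k assume x: "x \<in> carrier \<Gamma>" and k: "k \<in> Astar M"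
  let ?c = "\<lambda>g h. g \<otimes>\<^bsub>\<Gamma>\<^esub> h \<otimes>\<^bsub>\<Gamma>\<^esub> inv\<^bsub>\<Gamma>\<^esub> g"
  have kG: "k \<in> G" using k unfolding stabAstar_def by simp
  then have "?c x k \<in> G" using x by simp
  then obtain M' where M': "inc y M'" "?c x k \<in> Astar M'" using G_eq_Union_Astar by blast
  show "?c x k \<in> Astar M"
  proof (cases "M' = M")
    case True
    then show ?thesis using M' by simp
  next
    case False
    obtain b a where ba: "b \<in> Astar M'" "a \<in> A M" "x = b \<otimes>\<^bsub>\<Gamma>\<^esub> a"
      using Astar_A_eq_G[OF M M'(1) False[symmetric]] x unfolding set_mult_def by fastforce
    have G: "a \<in> G" "b \<in> G" using ba(1,2) unfolding stabA_def stabAstar_def by auto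
    \<comment> \<open>a k a^-1 lies in Astar M, and it is a conjugate of x k x^-1 by an element of Astar M'\<close>
    have "a \<in> Astar M" using A_subset_Astar[OF M] ba(2) by blast
    then have "?c a k \<in> Astar M"
      using k by (simp add: subgroup.m_closed[OF Astar_subgroup] subgroup.m_inv_closed[OF Astar_subgroup])
    moreover have "?c a k = ?c (inv\<^bsub>\<Gamma>\<^esub> b) (?c x k)"
      using ba(3) G kG by (simp add: aut.m_assoc aut.inv_mult_group aut.inv_mult_cancel_left)
    moreover have "?c (inv\<^bsub>\<Gamma>\<^esub> b) (?c x k) \<in> Astar M'"
      using ba(1) M'(2) by (simp add: subgroup.m_closed[OF Astar_subgroup] subgroup.m_inv_closed[OF Astar_subgroup])
    ultimately have "?c a k \<in> Sym"
      using Astar_inter_Astar[OF M M'(1) False[symmetric]] by auto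
    then have "inv\<^bsub>\<Gamma>\<^esub> a \<otimes>\<^bsub>\<Gamma>\<^esub> ?c a k \<otimes>\<^bsub>\<Gamma>\<^esub> a \<in> Sym"
      using normal.inv_op_closed1[OF Sym_normal] G by simp
    moreover have "inv\<^bsub>\<Gamma>\<^esub> a \<otimes>\<^bsub>\<Gamma>\<^esub> ?c a k \<otimes>\<^bsub>\<Gamma>\<^esub> a = k"
      using G kG by (simp add: aut.m_assoc aut.inv_mult_cancel_left)
    ultimately have "k \<in> Sym" by simp
    then have "?c x k \<in> Sym" using normal.inv_op_closed2[OF Sym_normal] x by simp
    then show ?thesis using Sym_subset_Astar[OF M] by blast
  qed
qed

lemma commutator_in_Sym_distinct:
  assumes "inc y M" "inc y M'" "M \<noteq> M'" and "x \<in> Astar M" "w \<in> Astar M'"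
  shows "commutator \<Gamma> x w \<in> Sym"
  using aut.commutator_in_normal_inter[OF Astar_normal Astar_normal, of M M' x w]
    Astar_inter_Astar assms by simp

lemma commutator_in_Sym:
  assumes x: "x \<in> G" and w: "w \<in> G"
  shows "commutator \<Gamma> x w \<in> Sym"
proof -
  obtain M where M: "inc y M" "x \<in> Astar M" using G_eq_Union_Astar x by blast
  obtain M2 where M2: "inc y M2" "w \<in> Astar M2" using G_eq_Union_Astar w by blast
  show ?thesis
  proof (cases "M = M2")
    case False
    show ?thesis by (rule commutator_in_Sym_distinct[OF M(1) M2(1) False M(2) M2(2)])
  next
    case same: True
    show ?thesis
    proof (cases "s = 1")
      case True
      then have "\<forall>a\<in>G. \<forall>b\<in>G. a = b" using card_G card_le_Suc0_iff_eq[of G] by simp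
      then have "x = \<one>\<^bsub>\<Gamma>\<^esub>" "w = \<one>\<^bsub>\<Gamma>\<^esub>" using x w G_closed(1) by blast+
      then show ?thesis using subgroup.one_closed[OF Sym_subgroup] by simp
    next
      case False
      \<comment> \<open>for c in Astar M' - Sym neither c nor w c lies in Astar M, and [x,w] is a product
          of [x, w c] and a conjugate of [x,c]^-1\<close>
      obtain M' where M': "inc y M'" "M \<noteq> M'" using ex_other_line_through by metis
      have "s * 1 < s * s" using order_pos False by (intro mult_strict_left_mono) simp_all
      then have "card Sym < card (Astar M')"
        using card_Sym card_Astar[OF M'(1)] by (simp add: power2_eq_square)
      then have "\<not> Astar M' \<subseteq> Sym" using card_mono[of Sym "Astar M'"] by auto
      then obtain c where c: "c \<in> Astar M'" "c \<notin> Sym" by blast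
      have cG: "c \<in> G" using c(1) unfolding stabAstar_def by simp
      then have "w \<otimes>\<^bsub>\<Gamma>\<^esub> c \<in> G" using w by simp
      then obtain M3 where M3: "inc y M3" "w \<otimes>\<^bsub>\<Gamma>\<^esub> c \<in> Astar M3"
        using G_eq_Union_Astar by blast
      have "M \<noteq> M3"
      proof
        assume "M = M3"
        then have "inv\<^bsub>\<Gamma>\<^esub> w \<otimes>\<^bsub>\<Gamma>\<^esub> (w \<otimes>\<^bsub>\<Gamma>\<^esub> c) \<in> Astar M"
          using M3(2) M2(2) same
          by (simp add: subgroup.m_closed[OF Astar_subgroup] subgroup.m_inv_closed[OF Astar_subgroup])
        then have "c \<in> Astar M \<inter> Astar M'" using w cG c(1) by (simp add: aut.inv_mult_cancel_left)
        then show False using Astar_inter_Astar[OF M(1) M'] c(2) by blast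
      qed
      have "commutator \<Gamma> x (w \<otimes>\<^bsub>\<Gamma>\<^esub> c) \<in> Sym"
        using commutator_in_Sym_distinct[OF M(1) M3(1) \<open>M \<noteq> M3\<close> M(2) M3(2)] .
      moreover have "commutator \<Gamma> x c \<in> Sym"
        using commutator_in_Sym_distinct[OF M(1) M' M(2) c(1)] .
      then have "w \<otimes>\<^bsub>\<Gamma>\<^esub> inv\<^bsub>\<Gamma>\<^esub> (commutator \<Gamma> x c) \<otimes>\<^bsub>\<Gamma>\<^esub> inv\<^bsub>\<Gamma>\<^esub> w \<in> Sym"
        using normal.inv_op_closed2[OF Sym_normal] subgroup.m_inv_closed[OF Sym_subgroup] w by simp
      ultimately show ?thesis
        using aut.commutator_eq_mult_right[of x w c] x w cG subgroup.m_closed[OF Sym_subgroup] by simp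
    qed
  qed
qed

lemma derived_subset_Sym: "derived \<Gamma> G \<subseteq> Sym"
  unfolding derived_def
  by (rule aut.generate_subgroup_incl[OF _ Sym_subgroup]) (auto intro: commutator_in_Sym)

lemma Inter_Astar_eq_Sym: "G \<inter> (\<Inter>M\<in>{M. inc y M}. Astar M) = Sym"
proof -
  obtain M where M: "inc y M" using ex_line_through by blast
  obtain M' where M': "inc y M'" "M' \<noteq> M" using ex_other_line_through by blast
  have "G \<inter> (\<Inter>M\<in>{M. inc y M}. Astar M) \<subseteq> Astar M \<inter> Astar M'" using M M' by blast
  then show ?thesis
    using Astar_inter_Astar[OF M M'(1) M'(2)[symmetric]] Sym_subset_Astar
    unfolding Sym_def by blast
qed

lemma coset_derived_counts:
  assumes M: "inc y M" and g: "g \<in> Sym"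
  shows "card (Astar M \<inter> (g <#\<^bsub>\<Gamma>\<^esub> derived \<Gamma> G)) = card (derived \<Gamma> G)"
    and "card (A M \<inter> (g <#\<^bsub>\<Gamma>\<^esub> derived \<Gamma> G)) = (if g \<in> derived \<Gamma> G then 1 else 0)"
proof -
  let ?D = "derived \<Gamma> G"
  have gG: "g \<in> G" using g unfolding Sym_def by simp
  have D: "subgroup ?D \<Gamma>" using aut.derived_is_subgroup by simp
  have "g <#\<^bsub>\<Gamma>\<^esub> ?D \<subseteq> Sym <#>\<^bsub>\<Gamma>\<^esub> Sym"
    unfolding l_coset_eq_set_mult using g derived_subset_Sym by (intro mono_set_mult) auto
  then have coset_Sym: "g <#\<^bsub>\<Gamma>\<^esub> ?D \<subseteq> Sym" using aut.subgroup_mult_id[OF Sym_subgroup] by simp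
  then have "Astar M \<inter> (g <#\<^bsub>\<Gamma>\<^esub> ?D) = g <#\<^bsub>\<Gamma>\<^esub> ?D" using Sym_subset_Astar[OF M] by blast
  then show "card (Astar M \<inter> (g <#\<^bsub>\<Gamma>\<^esub> ?D)) = card ?D"
    using aut.card_l_coset[of ?D g] subgroup.subset[OF D] gG by simp
  have "A M \<inter> (g <#\<^bsub>\<Gamma>\<^esub> ?D) \<subseteq> {\<one>\<^bsub>\<Gamma>\<^esub>}" using coset_Sym A_inter_Sym[OF M] by blast
  then have "card (A M \<inter> (g <#\<^bsub>\<Gamma>\<^esub> ?D)) = (if \<one>\<^bsub>\<Gamma>\<^esub> \<in> g <#\<^bsub>\<Gamma>\<^esub> ?D then 1 else 0)"
    by (rule card_inter_subset_singleton) (rule subgroup.one_closed[OF A_subgroup])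
  then show "card (A M \<inter> (g <#\<^bsub>\<Gamma>\<^esub> ?D)) = (if g \<in> ?D then 1 else 0)"
    using aut.one_in_l_coset_iff[OF D] gG by simp
qed

lemma conj_class_counts_Sym:
  assumes M: "inc y M" and g: "g \<in> Sym"
  shows "card (Astar M \<inter> conj_class \<Gamma> g) = card (conj_class \<Gamma> g)"
    and "card (A M \<inter> conj_class \<Gamma> g) = (if g = \<one>\<^bsub>\<Gamma>\<^esub> then 1 else 0)"
proof -
  have gG: "g \<in> G" using g unfolding Sym_def by simp
  have class_Sym: "conj_class \<Gamma> g \<subseteq> Sym" by (rule aut.conj_class_subset_normal[OF Sym_normal g])
  then have "Astar M \<inter> conj_class \<Gamma> g = conj_class \<Gamma> g" using Sym_subset_Astar[OF M] by blast
  then show "card (Astar M \<inter> conj_class \<Gamma> g) = card (conj_class \<Gamma> g)" by simp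
  have "A M \<inter> conj_class \<Gamma> g \<subseteq> {\<one>\<^bsub>\<Gamma>\<^esub>}" using class_Sym A_inter_Sym[OF M] by blast
  then have "card (A M \<inter> conj_class \<Gamma> g) = (if \<one>\<^bsub>\<Gamma>\<^esub> \<in> conj_class \<Gamma> g then 1 else 0)"
    by (rule card_inter_subset_singleton) (rule subgroup.one_closed[OF A_subgroup])
  then show "card (A M \<inter> conj_class \<Gamma> g) = (if g = \<one>\<^bsub>\<Gamma>\<^esub> then 1 else 0)"
    using aut.one_in_conj_class_iff gG by simp
qed

lemma conj_class_count_not_Sym:
  assumes Mi: "inc y Mi" and Mj: "inc y Mj" and g: "g \<in> Astar Mj - Sym"
  shows "card (Astar Mi \<inter> conj_class \<Gamma> g) = (if Mi = Mj then card (conj_class \<Gamma> g) else 0)"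
proof -
  have class_Astar: "conj_class \<Gamma> g \<subseteq> Astar Mj"
    using aut.conj_class_subset_normal[OF Astar_normal[OF Mj]] g by blast
  show ?thesis
  proof (cases "Mi = Mj")
    case True
    then show ?thesis using class_Astar by (simp add: Int_absorb1)
  next
    case False
    have "g \<in> G" using g unfolding stabAstar_def by simp
    then have "conj_class \<Gamma> g \<inter> Sym = {}"
      using aut.conj_class_disjoint_normal[OF Sym_normal] g by simp
    then have "Astar Mi \<inter> conj_class \<Gamma> g = {}"
      using class_Astar Astar_inter_Astar[OF Mi Mj False] by blast
    then show ?thesis using False by simp
  qed
qed

end

lemma GQ_order_pos:
  assumes GQ: "GQ inc s" and y: "\<not> collinear inc y P"
  shows "0 < s"
proof (rule ccontr)
  assume "\<not> 0 < s"
  then have single: "card {x. inc x l} = 1" "card {l. inc x l} = 1" for x l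
    using GQ unfolding GQ_def by simp_all
  obtain l where l: "inc P l" using single(2)[of P] by (metis card_1_singletonE mem_Collect_eq singletonI)
  then have "\<not> inc y l" using y unfolding collinear_def by blast
  then obtain v where v: "inc v l" "collinear inc y v" using GQ unfolding GQ_def by blast
  then obtain m where "inc y m" "inc v m" unfolding collinear_def by blast
  then have "y = v" using single(1)[of m] by (metis card_1_singletonE mem_Collect_eq singletonD)
  then show False using v(1) \<open>\<not> inc y l\<close> by simp
qed

theorem lemma2p7:
  fixes inc :: "'p::finite \<Rightarrow> 'l::finite \<Rightarrow> bool"
    and s :: nat and P y :: 'p and G :: "('p,'l) aut set"
  assumes "STGQ inc s P G" and "even s"
    and "\<not> collinear inc y P"
  defines "U0 \<equiv> G \<inter> (\<Inter>M\<in>{M. inc y M}. stabAstar inc P G M)"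
    and "D \<equiv> derived (aut_group G) G"
  assumes "inc y Mi" and "inc y Mj"
  shows
    "(\<forall>g\<in>U0. card (stabAstar inc P G Mi \<inter> (g <#\<^bsub>aut_group G\<^esub> D)) = card D \<and>
              card (stabA G Mi \<inter> (g <#\<^bsub>aut_group G\<^esub> D)) = (if g \<in> D then 1 else 0))
     \<and> (\<forall>g\<in>U0. card (stabAstar inc P G Mi \<inter> conj_class (aut_group G) g)
                   = card (conj_class (aut_group G) g) \<and>
              card (stabA G Mi \<inter> conj_class (aut_group G) g)
                   = (if g = \<one>\<^bsub>aut_group G\<^esub> then 1 else 0))
     \<and> (\<forall>g \<in> stabAstar inc P G Mj - U0.
              card (stabAstar inc P G Mi \<inter> conj_class (aut_group G) g)
                = (if Mi = Mj then card (conj_class (aut_group G) g) else 0))"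
proof -
  have "GQ inc s" using assms(1) unfolding STGQ_def EGQ_def by blast
  then have "0 < s" using GQ_order_pos assms(3) by blast
  have "skew_translation_gq inc s P G y"
    using assms(1,3) \<open>GQ inc s\<close> \<open>0 < s\<close>
    unfolding skew_translation_gq_def skew_translation_gq_axioms_def elation_gq_def
      elation_gq_axioms_def gq_def STGQ_def EGQ_def
    by blast
  then interpret skew_translation_gq inc s P G y .
  have "U0 = Sym" unfolding U0_def by (rule Inter_Astar_eq_Sym)
  then show ?thesis
    unfolding D_def
    using coset_derived_counts[OF assms(6)] conj_class_counts_Sym[OF assms(6)]
      conj_class_count_not_Sym[OF assms(6,7)]
    by blast
qed

end
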